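(* Let $\alpha,\beta\in(0,\infty)$ and let $Y$ be a non-negative random variable with finite expectation $\mu=\mathbb{E}Y$ and (finite) variance $\sigma^2=\mathrm{Var}\,Y$. Then for all $c\in(0,\infty)$, $$\mathbb{E}\frac{1}{(\alpha+Y)^\beta}\leq\frac{1}{(\alpha+c)^\beta}+\frac{\beta(c-\mu)}{(\alpha+c)^{\beta+1}}+\frac{\sigma^2+(c-\mu)^2}{c^2}\Big(\frac{1}{\alpha^\beta}-\frac{\alpha+c(\beta+1)}{(\alpha+c)^{\beta+1}}\Big).$$ *)

theory Defs
  imports "HOL-Probability.Probability"
begin

end

theory Submission
  imports Defs
begin

(* Put f y = (alpha + y) powr -beta. Its second derivative is antitone, and for such f the quotient
   (f y - f c - f' c (y - c)) / (y - c)^2 is antitone on [0, c) and bounded by f'' c / 2 from above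
   on (c, oo) and from below on [0, c). Hence it is maximal at y = 0, i.e. f lies below the quadratic
   that is tangent to f at c and meets f at 0. Evaluating at Y and taking expectations, with
   E (c - Y)^2 = sigma^2 + (c - mu)^2, gives the bound. *)

lemma below_tangent_if_deriv_antitone:
  fixes g g' :: "real \<Rightarrow> real"
  assumes deriv: "\<And>x. a \<le> x \<Longrightarrow> (g has_real_derivative g' x) (at x)"
    and antitone: "\<And>x y. a \<le> x \<Longrightarrow> x \<le> y \<Longrightarrow> g' y \<le> g' x"
    and "a \<le> x" "a \<le> y"
  shows "g y \<le> g x + g' x * (y - x)"
proof (cases x y rule: linorder_cases)
  case less
  then obtain z where "x < z" "g y - g x = (y - x) * g' z"
    using MVT2[of x y g g'] deriv \<open>a \<le> x\<close> by force
  moreover have "(y - x) * g' z \<le> (y - x) * g' x"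
    using antitone[of x z] \<open>a \<le> x\<close> \<open>x < z\<close> less by (simp add: mult_left_mono)
  ultimately show ?thesis by (simp add: algebra_simps)
next
  case greater
  then obtain z where "z < x" "a \<le> z" "g x - g y = (x - y) * g' z"
    using MVT2[of y x g g'] deriv \<open>a \<le> y\<close> by force
  moreover have "(x - y) * g' x \<le> (x - y) * g' z"
    using antitone[of z x] \<open>a \<le> z\<close> \<open>z < x\<close> greater by (simp add: mult_left_mono)
  ultimately show ?thesis by (simp add: algebra_simps)
qed simp

lemma second_order_taylor_bounds:
  fixes f f' f'' :: "real \<Rightarrow> real"
  assumes f': "\<And>x. a \<le> x \<Longrightarrow> (f has_real_derivative f' x) (at x)"
    and f'': "\<And>x. a \<le> x \<Longrightarrow> (f' has_real_derivative f'' x) (at x)"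
    and antitone: "\<And>x y. a \<le> x \<Longrightarrow> x \<le> y \<Longrightarrow> f'' y \<le> f'' x"
    and "a \<le> c"
  shows second_order_taylor_upper: "c \<le> y \<Longrightarrow> f y \<le> f c + f' c * (y - c) + f'' c / 2 * (y - c)\<^sup>2"
    and second_order_taylor_lower: "a \<le> y \<Longrightarrow> y \<le> c \<Longrightarrow> f c + f' c * (y - c) + f'' c / 2 * (y - c)\<^sup>2 \<le> f y"
proof -
  define R where "R t = f t - (f c + f' c * (t - c) + f'' c / 2 * (t - c)\<^sup>2)" for t
  have R_antitone: "R t \<le> R s" if "a \<le> s" "s \<le> t" for s t
  proof (rule DERIV_nonpos_imp_nonincreasing[OF \<open>s \<le> t\<close>])
    fix x assume "s \<le> x" "x \<le> t"
    then have "a \<le> x" using \<open>a \<le> s\<close> by simp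
    have "(R has_real_derivative f' x - (f' c + f'' c * (x - c))) (at x)"
      unfolding R_def[abs_def] using f'[OF \<open>a \<le> x\<close>] by (auto intro!: derivative_eq_intros)
    moreover have "f' x \<le> f' c + f'' c * (x - c)"
      using below_tangent_if_deriv_antitone[OF f'' antitone \<open>a \<le> c\<close> \<open>a \<le> x\<close>] .
    ultimately show "\<exists>D. (R has_real_derivative D) (at x) \<and> D \<le> 0" by auto
  qed
  have "R c = 0" by (simp add: R_def)
  show "f y \<le> f c + f' c * (y - c) + f'' c / 2 * (y - c)\<^sup>2" if "c \<le> y"
    using R_antitone[OF \<open>a \<le> c\<close> that] \<open>R c = 0\<close> by (simp add: R_def)
  show "f c + f' c * (y - c) + f'' c / 2 * (y - c)\<^sup>2 \<le> f y" if "a \<le> y" "y \<le> c"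
    using R_antitone[OF that] \<open>R c = 0\<close> by (simp add: R_def)
qed

lemma taylor_quotient_antitone:
  fixes f f' f'' :: "real \<Rightarrow> real"
  assumes f': "\<And>x. a \<le> x \<Longrightarrow> (f has_real_derivative f' x) (at x)"
    and f'': "\<And>x. a \<le> x \<Longrightarrow> (f' has_real_derivative f'' x) (at x)"
    and antitone: "\<And>x y. a \<le> x \<Longrightarrow> x \<le> y \<Longrightarrow> f'' y \<le> f'' x"
    and "a \<le> s" "s \<le> t" "t < c"
  shows "(f t - f c - f' c * (t - c)) / (t - c)\<^sup>2 \<le> (f s - f c - f' c * (s - c)) / (s - c)\<^sup>2"
proof -
  define Q where "Q t = (f t - f c - f' c * (t - c)) / (t - c)\<^sup>2" for t
  (* Q' = N / (t - c)^3, and N vanishes at c and decreases because f' lies below its tangents. *)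
  define N where "N t = (t - c) * (f' t + f' c) - 2 * (f t - f c)" for t
  have "a \<le> c" using \<open>a \<le> s\<close> \<open>s \<le> t\<close> \<open>t < c\<close> by simp
  have N_antitone: "N y \<le> N x" if "a \<le> x" "x \<le> y" for x y
  proof (rule DERIV_nonpos_imp_nonincreasing[OF \<open>x \<le> y\<close>])
    fix z assume "x \<le> z" "z \<le> y"
    then have "a \<le> z" using \<open>a \<le> x\<close> by simp
    have "(N has_real_derivative f' c - (f' z + f'' z * (c - z))) (at z)"
      unfolding N_def[abs_def] using f'[OF \<open>a \<le> z\<close>] f''[OF \<open>a \<le> z\<close>]
      by (auto intro!: derivative_eq_intros simp: algebra_simps)
    moreover have "f' c \<le> f' z + f'' z * (c - z)"
      using below_tangent_if_deriv_antitone[OF f'' antitone \<open>a \<le> z\<close> \<open>a \<le> c\<close>] .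
    ultimately show "\<exists>D. (N has_real_derivative D) (at z) \<and> D \<le> 0" by auto
  qed
  have "Q t \<le> Q s"
  proof (rule DERIV_nonpos_imp_nonincreasing[OF \<open>s \<le> t\<close>])
    fix x assume "s \<le> x" "x \<le> t"
    then have "a \<le> x" "x < c" using \<open>a \<le> s\<close> \<open>t < c\<close> by auto
    have "(Q has_real_derivative
        ((f' x - f' c) * (x - c)\<^sup>2 - (f x - f c - f' c * (x - c)) * (2 * (x - c))) / ((x - c)\<^sup>2)\<^sup>2) (at x)"
      unfolding Q_def[abs_def] using f'[OF \<open>a \<le> x\<close>] \<open>x < c\<close>
      by (auto intro!: derivative_eq_intros)
    also have "((f' x - f' c) * (x - c)\<^sup>2 - (f x - f c - f' c * (x - c)) * (2 * (x - c))) / ((x - c)\<^sup>2)\<^sup>2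
        = N x / (x - c) ^ 3"
    proof -
      have "(A * d\<^sup>2 - B * (2 * d)) / (d\<^sup>2)\<^sup>2 = (A * d - 2 * B) / d ^ 3" if "d \<noteq> 0" for A B d :: real
        using that by (simp add: field_simps power2_eq_square power3_eq_cube power4_eq_xxxx)
      from this[of "x - c" "f' x - f' c" "f x - f c - f' c * (x - c)"] \<open>x < c\<close>
      show ?thesis by (simp add: N_def algebra_simps)
    qed
    finally have "(Q has_real_derivative N x / (x - c) ^ 3) (at x)" .
    moreover have "0 \<le> N x"
      using N_antitone[OF \<open>a \<le> x\<close>, of c] \<open>x < c\<close> by (simp add: N_def)
    moreover have "(x - c) ^ 3 < 0" using \<open>x < c\<close> by simp
    ultimately show "\<exists>D. (Q has_real_derivative D) (at x) \<and> D \<le> 0"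
      by (metis divide_nonneg_neg)
  qed
  then show ?thesis by (simp add: Q_def)
qed

lemma quadratic_majorant_if_deriv2_antitone:
  fixes f f' f'' :: "real \<Rightarrow> real"
  assumes f': "\<And>x. a \<le> x \<Longrightarrow> (f has_real_derivative f' x) (at x)"
    and f'': "\<And>x. a \<le> x \<Longrightarrow> (f' has_real_derivative f'' x) (at x)"
    and antitone: "\<And>x y. a \<le> x \<Longrightarrow> x \<le> y \<Longrightarrow> f'' y \<le> f'' x"
    and "a < c" "a \<le> y"
  shows "f y \<le> f c + f' c * (y - c) + (f a - f c - f' c * (a - c)) / (a - c)\<^sup>2 * (y - c)\<^sup>2"
proof (cases "y = c")
  case False
  define Q where "Q t = (f t - f c - f' c * (t - c)) / (t - c)\<^sup>2" for t
  have "Q y \<le> Q a"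
  proof (cases "y < c")
    case True
    show ?thesis
      unfolding Q_def by (rule taylor_quotient_antitone[OF f' f'' antitone order.refl \<open>a \<le> y\<close> True])
  next
    case False
    then have "c < y" using \<open>y \<noteq> c\<close> by simp
    have "Q y \<le> f'' c / 2"
      using second_order_taylor_upper[where a = a and c = c and y = y, OF f' f'' antitone] \<open>a < c\<close> \<open>c < y\<close>
      by (simp add: Q_def divide_le_eq algebra_simps)
    also have "f'' c / 2 \<le> Q a"
      using second_order_taylor_lower[where a = a and c = c and y = a, OF f' f'' antitone] \<open>a < c\<close>
      by (simp add: Q_def le_divide_eq algebra_simps)
    finally show ?thesis .
  qed
  then have "Q y * (y - c)\<^sup>2 \<le> Q a * (y - c)\<^sup>2"
    by (simp add: mult_right_mono)
  moreover have "Q y * (y - c)\<^sup>2 = f y - f c - f' c * (y - c)"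
    using False by (simp add: Q_def)
  ultimately show ?thesis
    unfolding Q_def[of a] by linarith
qed simp

lemma inverse_powr_quadratic_majorant:
  fixes \<alpha> \<beta> c y :: real
  assumes "\<alpha> > 0" "\<beta> \<ge> 0" "c > 0" "y \<ge> 0"
  shows "1 / (\<alpha> + y) powr \<beta> \<le> 1 / (\<alpha> + c) powr \<beta> + \<beta> * (c - y) / (\<alpha> + c) powr (\<beta> + 1)
           + (c - y)\<^sup>2 / c\<^sup>2 * (1 / \<alpha> powr \<beta> - (\<alpha> + c * (\<beta> + 1)) / (\<alpha> + c) powr (\<beta> + 1))"
proof -
  define f where "f t = (\<alpha> + t) powr (- \<beta>)" for t
  define f' where "f' t = - \<beta> * (\<alpha> + t) powr (- \<beta> - 1)" for t
  define f'' where "f'' t = \<beta> * (\<beta> + 1) * (\<alpha> + t) powr (- \<beta> - 2)" for t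
  have "f y \<le> f c + f' c * (y - c) + (f 0 - f c - f' c * (0 - c)) / (0 - c)\<^sup>2 * (y - c)\<^sup>2"
  proof (rule quadratic_majorant_if_deriv2_antitone)
    fix x :: real assume "0 \<le> x"
    then have "\<alpha> + x > 0" using \<open>\<alpha> > 0\<close> by simp
    then show "(f has_real_derivative f' x) (at x)" "(f' has_real_derivative f'' x) (at x)"
      unfolding f_def[abs_def] f'_def[abs_def] f''_def
      by (auto intro!: derivative_eq_intros simp: algebra_simps)
    fix x' assume "x \<le> x'"
    then show "f'' x' \<le> f'' x"
      unfolding f''_def using \<open>\<alpha> + x > 0\<close> \<open>\<beta> \<ge> 0\<close>
      by (intro mult_left_mono powr_mono2') auto
  qed (use assms in auto)
  moreover have "f y = 1 / (\<alpha> + y) powr \<beta>" "f 0 = 1 / \<alpha> powr \<beta>" "f c = 1 / (\<alpha> + c) powr \<beta>"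
    using assms by (simp_all add: f_def powr_minus divide_inverse)
  moreover have "f' c = - \<beta> / (\<alpha> + c) powr (\<beta> + 1)"
    using powr_minus[of "\<alpha> + c" "\<beta> + 1"] by (simp add: f'_def divide_inverse)
  moreover have "1 / (\<alpha> + c) powr \<beta> = (\<alpha> + c) / (\<alpha> + c) powr (\<beta> + 1)"
    using assms by (simp add: powr_add)
  ultimately show ?thesis
    by (simp add: power2_commute[of y] diff_divide_distrib add_divide_distrib algebra_simps)
qed

lemma (in prob_space) expectation_square_deviation:
  fixes X :: "'a \<Rightarrow> real"
  assumes "integrable M X" "integrable M (\<lambda>x. (X x)\<^sup>2)"
  shows "expectation (\<lambda>x. (c - X x)\<^sup>2) = variance X + (c - expectation X)\<^sup>2"
  using assms by (simp add: power2_diff variance_eq prob_space) (simp add: power2_eq_square)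

lemma (in prob_space) integrable_square_deviation:
  fixes X :: "'a \<Rightarrow> real"
  assumes "integrable M X" "integrable M (\<lambda>x. (X x)\<^sup>2)"
  shows "integrable M (\<lambda>x. (c - X x)\<^sup>2)"
  using assms by (simp add: power2_diff)

theorem mainTheorem8:
  fixes M :: "'a measure" and Y :: "'a \<Rightarrow> real"
    and \<alpha> \<beta> c :: real
  assumes "prob_space M"
    and "Y \<in> borel_measurable M"
    and "AE x in M. Y x \<ge> 0"
    and "integrable M Y"
    and "integrable M (\<lambda>x. (Y x)\<^sup>2)"
    and "\<alpha> > 0" and "\<beta> > 0" and "c > 0"
  shows "prob_space.expectation M (\<lambda>x. 1 / (\<alpha> + Y x) powr \<beta>)
      \<le> 1 / (\<alpha> + c) powr \<beta>
         + \<beta> * (c - prob_space.expectation M Y) / (\<alpha> + c) powr (\<beta> + 1)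
         + (prob_space.variance M Y + (c - prob_space.expectation M Y)\<^sup>2) / c\<^sup>2
           * (1 / \<alpha> powr \<beta> - (\<alpha> + c * (\<beta> + 1)) / (\<alpha> + c) powr (\<beta> + 1))"
proof -
  interpret prob_space M by fact
  define D where "D = 1 / \<alpha> powr \<beta> - (\<alpha> + c * (\<beta> + 1)) / (\<alpha> + c) powr (\<beta> + 1)"
  define q where "q y = 1 / (\<alpha> + c) powr \<beta> + \<beta> * (c - y) / (\<alpha> + c) powr (\<beta> + 1) + (c - y)\<^sup>2 / c\<^sup>2 * D"
    for y
  have "AE x in M. 1 / (\<alpha> + Y x) powr \<beta> \<le> q (Y x)"
    using assms(3) unfolding q_def D_def
    by eventually_elim (rule inverse_powr_quadratic_majorant; use assms in simp)
  moreover have "integrable M (\<lambda>x. 1 / (\<alpha> + Y x) powr \<beta>)"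
  proof (rule integrable_const_bound)
    show "AE x in M. norm (1 / (\<alpha> + Y x) powr \<beta>) \<le> 1 / \<alpha> powr \<beta>"
      using assms(3) by eventually_elim (use assms in \<open>simp add: frac_le powr_mono2\<close>)
  qed (use assms(2) in measurable)
  moreover have "integrable M (\<lambda>x. q (Y x))"
    using assms(4,5) integrable_square_deviation by (simp add: q_def)
  ultimately have "expectation (\<lambda>x. 1 / (\<alpha> + Y x) powr \<beta>) \<le> expectation (\<lambda>x. q (Y x))"
    by (intro integral_mono_AE)
  also have "\<dots> = 1 / (\<alpha> + c) powr \<beta> + \<beta> * (c - expectation Y) / (\<alpha> + c) powr (\<beta> + 1)
      + expectation (\<lambda>x. (c - Y x)\<^sup>2) / c\<^sup>2 * D"
    using assms(4,5) integrable_square_deviation by (simp add: q_def prob_space)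
  also have "expectation (\<lambda>x. (c - Y x)\<^sup>2) = variance Y + (c - expectation Y)\<^sup>2"
    using assms(4,5) by (rule expectation_square_deviation)
  finally show ?thesis
    by (simp add: D_def)
qed

end
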